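(* Let $(X,\phi)$ be a uniformly Lipschitz flow on a compact metric space $(X,d)$, let $L=L(1)$, and let $\mu\in\mathcal{M}(X)$. Then for every $\epsilon>0$ and every $x\in X$, \begin{align*} \overline{h}^{BK}_\mu(\phi_1,x,\epsilon)\le\overline{h}^{BK}_\mu(\phi,x,\epsilon)\le\overline{h}^{BK}_\mu(\phi_1,x,\epsilon/L),\\ \underline{h}^{BK}_\mu(\phi_1,x,\epsilon)\le\underline{h}^{BK}_\mu(\phi,x,\epsilon)\le\underline{h}^{BK}_\mu(\phi_1,x,\epsilon/L). \end{align*}
   Context: A flow: $\phi:X\times\mathbb{R}\to X$ continuous, $\phi_t(x)=\phi(x,t)$, $\phi_0=\mathrm{id}$, $\phi_{t+s}=\phi_t\circ\phi_s$. Uniformly Lipschitz: for every $t_0>0$ there is $L(t_0)>0$ such that for all $\epsilon>0$ and $x,y\in X$, $d(x,y)\le\epsilon/L(t_0)$ implies $d(\phi_sx,\phi_sy)<\epsilon$ for all $s\in[0,t_0]$. $\mathcal{M}(X)$: Borel probability measures on $X$. Balls: $B_t(x,\epsilon,\phi)=\{y:d(\phi_sx,\phi_sy)<\epsilon\ \forall s\in[0,t]\}$, $B_n(x,\epsilon,\phi_1)=\{y:d(\phi_jx,\phi_jy)<\epsilon,\ j=0,\dots,n-1\}$. Local entropies: $\overline{h}^{BK}_\mu(\phi,x,\epsilon)=\limsup_{t\to\infty}-\frac1t\log\mu(B_t(x,\epsilon,\phi))$, $\underline{h}^{BK}_\mu(\phi,x,\epsilon)=\liminf_{t\to\infty}-\frac1t\log\mu(B_t(x,\epsilon,\phi))$,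 and $\overline{h}^{BK}_\mu(\phi_1,x,\epsilon)$, $\underline{h}^{BK}_\mu(\phi_1,x,\epsilon)$ are the $\limsup$, $\liminf$ over $n\in\mathbb{N}$, $n\to\infty$, of $-\frac1n\log\mu(B_n(x,\epsilon,\phi_1))$. *)

theory Defs
  imports "HOL-Probability.Probability"
begin

definition is_flow :: "'a::metric_space set \<Rightarrow> (real \<Rightarrow> 'a \<Rightarrow> 'a) \<Rightarrow> bool" where
  "is_flow X \<phi> \<longleftrightarrow>
     continuous_on (X \<times> UNIV) (\<lambda>(x, t). \<phi> t x) \<and>
     (\<forall>t. \<phi> t ` X \<subseteq> X) \<and>
     (\<forall>x\<in>X. \<phi> 0 x = x) \<and>
     (\<forall>x\<in>X. \<forall>t s. \<phi> (t + s) x = \<phi> t (\<phi> s x))"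

definition unif_lipschitz_flow ::
  "'a::metric_space set \<Rightarrow> (real \<Rightarrow> 'a \<Rightarrow> 'a) \<Rightarrow> (real \<Rightarrow> real) \<Rightarrow> bool" where
  "unif_lipschitz_flow X \<phi> L \<longleftrightarrow>
     (\<forall>t0>0. L t0 > 0 \<and>
        (\<forall>\<epsilon>>0. \<forall>x\<in>X. \<forall>y\<in>X. dist x y \<le> \<epsilon> / L t0 \<longrightarrow>
            (\<forall>s\<in>{0..t0}. dist (\<phi> s x) (\<phi> s y) < \<epsilon>)))"

definition bowen_ball_flow ::
  "'a::metric_space set \<Rightarrow> (real \<Rightarrow> 'a \<Rightarrow> 'a) \<Rightarrow> real \<Rightarrow> 'a \<Rightarrow> real \<Rightarrow> 'a set" where
  "bowen_ball_flow X \<phi> t x \<epsilon> = {y\<in>X. \<forall>s\<in>{0..t}. dist (\<phi> s x) (\<phi> s y) < \<epsilon>}"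

definition bowen_ball_map ::
  "'a::metric_space set \<Rightarrow> ('a \<Rightarrow> 'a) \<Rightarrow> nat \<Rightarrow> 'a \<Rightarrow> real \<Rightarrow> 'a set" where
  "bowen_ball_map X f n x \<epsilon> = {y\<in>X. \<forall>j<n. dist ((f ^^ j) x) ((f ^^ j) y) < \<epsilon>}"

definition neg_log_rate :: "'a measure \<Rightarrow> 'a set \<Rightarrow> real \<Rightarrow> ereal" where
  "neg_log_rate M B t = (if measure M B = 0 then \<infinity> else ereal (- ln (measure M B) / t))"

definition upper_BK_flow ::
  "'a::metric_space set \<Rightarrow> 'a measure \<Rightarrow> (real \<Rightarrow> 'a \<Rightarrow> 'a) \<Rightarrow> 'a \<Rightarrow> real \<Rightarrow> ereal" where
  "upper_BK_flow X M \<phi> x \<epsilon> = Limsup at_top (\<lambda>t::real. neg_log_rate M (bowen_ball_flow X \<phi> t x \<epsilon>) t)"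

definition lower_BK_flow ::
  "'a::metric_space set \<Rightarrow> 'a measure \<Rightarrow> (real \<Rightarrow> 'a \<Rightarrow> 'a) \<Rightarrow> 'a \<Rightarrow> real \<Rightarrow> ereal" where
  "lower_BK_flow X M \<phi> x \<epsilon> = Liminf at_top (\<lambda>t::real. neg_log_rate M (bowen_ball_flow X \<phi> t x \<epsilon>) t)"

definition upper_BK_map ::
  "'a::metric_space set \<Rightarrow> 'a measure \<Rightarrow> ('a \<Rightarrow> 'a) \<Rightarrow> 'a \<Rightarrow> real \<Rightarrow> ereal" where
  "upper_BK_map X M f x \<epsilon> = Limsup sequentially (\<lambda>n. neg_log_rate M (bowen_ball_map X f n x \<epsilon>) (real n))"

definition lower_BK_map ::
  "'a::metric_space set \<Rightarrow> 'a measure \<Rightarrow> ('a \<Rightarrow> 'a) \<Rightarrow> 'a \<Rightarrow> real \<Rightarrow> ereal" where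
  "lower_BK_map X M f x \<epsilon> = Liminf sequentially (\<lambda>n. neg_log_rate M (bowen_ball_map X f n x \<epsilon>) (real n))"

end

theory Submission
  imports Defs "HOL-Real_Asymp.Real_Asymp"
begin

(*
  Compare Bowen balls at matching times. Every integer time j < n lies in [0, t] once n <= t + 1,
  so the flow ball B_t(x, eps) lies inside the time-one ball B_n(x, eps). Conversely, every s in
  [0, t] with t <= n is j + r with j < n and r in [0, 1], so uniform Lipschitz continuity over unit
  time puts B_n(x, eps / L(1)) inside B_t(x, eps). As -log mu is antitone on sets, the normalised
  rates compare along t and n = ceil t, and the change of normalisation n / t tends to 1; passing
  to limsup and liminf gives the four inequalities. Bowen balls are relatively open in X, hence
  measurable.
*)

lemma Limsup_compose_filterlim_le:
  fixes g :: "'b \<Rightarrow> 'c::complete_linorder"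
  assumes "filterlim f G F"
  shows "Limsup F (\<lambda>x. g (f x)) \<le> Limsup G g"
proof -
  have "Limsup F (\<lambda>x. g (f x)) \<le> Limsup (filtermap f F) g"
    by (rule Limsup_filtermap_ge)
  also have "\<dots> \<le> Limsup G g"
    using assms unfolding filterlim_def Limsup_def
    by (intro INF_superset_mono) (auto simp: le_filter_def)
  finally show ?thesis .
qed

lemma Liminf_compose_filterlim_ge:
  fixes g :: "'b \<Rightarrow> 'c::complete_linorder"
  assumes "filterlim f G F"
  shows "Liminf G g \<le> Liminf F (\<lambda>x. g (f x))"
proof -
  have "Liminf G g \<le> Liminf (filtermap f F) g"
    using assms unfolding filterlim_def Liminf_def
    by (intro SUP_subset_mono) (auto simp: le_filter_def)
  also have "\<dots> \<le> Liminf F (\<lambda>x. g (f x))"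
    by (rule Liminf_filtermap_le)
  finally show ?thesis .
qed

lemma Limsup_mult_tendsto_one_le:
  fixes v :: "'a \<Rightarrow> ereal"
  assumes u: "(u \<longlongrightarrow> 1) F" and v: "eventually (\<lambda>x. 0 \<le> v x) F"
  shows "Limsup F (\<lambda>x. ereal (u x) * v x) \<le> Limsup F v"
proof (cases "F = bot")
  case False
  have bound: "Limsup F (\<lambda>x. ereal (u x) * v x) \<le> ereal c * Limsup F v" if "1 < c" for c
  proof -
    have "eventually (\<lambda>x. ereal (u x) * v x \<le> ereal c * v x) F"
      using order_tendstoD(2)[OF u that] v
      by eventually_elim (auto intro: ereal_mult_right_mono)
    then have "Limsup F (\<lambda>x. ereal (u x) * v x) \<le> Limsup F (\<lambda>x. ereal c * v x)"
      by (rule Limsup_mono)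
    also have "\<dots> = ereal c * Limsup F v"
      using False that by (intro Limsup_ereal_mult_left) auto
    finally show ?thesis .
  qed
  have "((\<lambda>c. ereal c * Limsup F v) \<longlongrightarrow> ereal 1 * Limsup F v) (at_right 1)"
    by (intro tendsto_mult_ereal tendsto_ereal tendsto_intros) auto
  moreover have "eventually (\<lambda>c. Limsup F (\<lambda>x. ereal (u x) * v x) \<le> ereal c * Limsup F v) (at_right 1)"
    using eventually_at_right_less[of "1::real"] by eventually_elim (rule bound)
  ultimately show ?thesis
    by (intro tendsto_lowerbound) auto
qed simp

lemma filterlim_nat_ceiling_sequentially:
  "filterlim (\<lambda>t::real. nat \<lceil>t\<rceil>) sequentially at_top"
  by real_asymp

lemma neg_log_rate_nonneg:
  assumes "prob_space M" and "0 < t"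
  shows "0 \<le> neg_log_rate M B t"
proof -
  interpret prob_space M by fact
  have "ln (prob B) \<le> 0" if "prob B \<noteq> 0"
    using that prob_le_1[of B] by (simp add: order.not_eq_order_implies_strict)
  then show ?thesis
    using assms(2) by (simp add: neg_log_rate_def divide_nonpos_pos)
qed

lemma neg_log_rate_antimono:
  assumes "prob_space M" and "A \<subseteq> B" and "B \<in> sets M" and "0 < t" and "t \<le> t'"
  shows "neg_log_rate M B t' \<le> neg_log_rate M A t"
proof (cases "measure M A = 0")
  case False
  interpret prob_space M by fact
  have "0 < prob A" using False measure_nonneg[of M A] by linarith
  moreover have "prob A \<le> prob B" using assms(2,3) by (rule finite_measure_mono)
  ultimately have "- ln (prob B) \<le> - ln (prob A)" and "0 \<le> - ln (prob B)"
    using prob_le_1[of B] by auto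
  then have "- ln (prob B) / t' \<le> - ln (prob A) / t"
    using assms(4,5) by (intro frac_le) linarith+
  with \<open>0 < prob A\<close> \<open>prob A \<le> prob B\<close> show ?thesis
    by (simp add: neg_log_rate_def)
qed (simp add: neg_log_rate_def)

lemma neg_log_rate_rescale:
  assumes "0 < s" and "0 < t"
  shows "neg_log_rate M B t = ereal (s / t) * neg_log_rate M B s"
  using assms by (simp add: neg_log_rate_def)

lemma openin_imp_sets_restrict_borel:
  assumes "openin (top_of_set X) S"
  shows "S \<in> sets (restrict_space borel X)"
  using assms by (auto simp: openin_open sets_restrict_space)

lemma openin_uniformly_close_on_compact:
  fixes \<phi> :: "real \<Rightarrow> 'a::metric_space \<Rightarrow> 'a"
  assumes cont: "continuous_on (X \<times> UNIV) (\<lambda>(x, t). \<phi> t x)" and "compact K" and "x \<in> X"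
  shows "openin (top_of_set X) {y\<in>X. \<forall>s\<in>K. dist (\<phi> s x) (\<phi> s y) < \<epsilon>}"
    (is "openin _ ?B")
proof -
  define d where "d = (\<lambda>(y, s). dist (\<phi> s x) (\<phi> s y))"
  have "continuous_on (X \<times> UNIV) (\<lambda>p. (x, snd p))"
    and "(\<lambda>p. (x, snd p)) ` (X \<times> UNIV) \<subseteq> X \<times> UNIV"
    using \<open>x \<in> X\<close> by (auto intro!: continuous_intros)
  from continuous_on_compose2[OF cont this]
  have "continuous_on (X \<times> UNIV) (\<lambda>(y, s). \<phi> s x)"
    by (simp add: case_prod_unfold)
  then have "continuous_on (X \<times> UNIV) d"
    unfolding d_def using cont by (auto simp: case_prod_unfold intro!: continuous_on_dist)
  then obtain W where "open W" and W: "(X \<times> UNIV) \<inter> d -` {..<\<epsilon>} = (X \<times> UNIV) \<inter> W"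
    using continuous_openin_preimage_gen[OF _ open_lessThan] unfolding openin_open by metis
  show ?thesis
  proof (subst openin_subopen, intro ballI)
    fix y assume y: "y \<in> ?B"
    then have "{y} \<times> K \<subseteq> W"
      using W by (auto simp: d_def)
    then obtain U where "y \<in> U" and "open U" and "U \<times> K \<subseteq> W"
      using Elementary_Topology.tube_lemma[OF \<open>compact K\<close> \<open>open W\<close>] by blast
    then show "\<exists>T. openin (top_of_set X) T \<and> y \<in> T \<and> T \<subseteq> ?B"
      using y W by (intro exI[of _ "X \<inter> U"]) (fastforce simp: openin_open d_def)
  qed
qed

lemma flow_time_one_iterate:
  assumes "is_flow X \<phi>" and "y \<in> X"
  shows "(\<phi> 1 ^^ j) y = \<phi> (real j) y"
proof (induction j)
  case 0
  then show ?case using assms by (simp add: is_flow_def)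
next
  case (Suc j)
  then show ?case using assms by (simp add: is_flow_def add.commute)
qed

lemma bowen_ball_map_time_one_eq:
  assumes "is_flow X \<phi>" and "x \<in> X"
  shows "bowen_ball_map X (\<phi> 1) n x \<epsilon>
    = {y\<in>X. \<forall>s\<in>real ` {..<n}. dist (\<phi> s x) (\<phi> s y) < \<epsilon>}"
  using assms flow_time_one_iterate[OF assms(1)] by (auto simp: bowen_ball_map_def)

lemma sets_bowen_ball_flow:
  assumes "is_flow X \<phi>" and "x \<in> X"
  shows "bowen_ball_flow X \<phi> t x \<epsilon> \<in> sets (restrict_space borel X)"
  unfolding bowen_ball_flow_def using assms
  by (intro openin_imp_sets_restrict_borel openin_uniformly_close_on_compact)
     (auto simp: is_flow_def)

lemma sets_bowen_ball_map_time_one: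
  assumes "is_flow X \<phi>" and "x \<in> X"
  shows "bowen_ball_map X (\<phi> 1) n x \<epsilon> \<in> sets (restrict_space borel X)"
  unfolding bowen_ball_map_time_one_eq[OF assms] using assms
  by (intro openin_imp_sets_restrict_borel openin_uniformly_close_on_compact finite_imp_compact)
     (auto simp: is_flow_def)

lemma bowen_ball_flow_subset_map_time_one:
  assumes "is_flow X \<phi>" and "x \<in> X" and "real n \<le> t + 1"
  shows "bowen_ball_flow X \<phi> t x \<epsilon> \<subseteq> bowen_ball_map X (\<phi> 1) n x \<epsilon>"
  using assms(3) unfolding bowen_ball_map_time_one_eq[OF assms(1,2)] bowen_ball_flow_def
  by force

lemma unit_interval_cover_nat:
  assumes "0 \<le> s" and "s \<le> real n" and "0 < n"
  shows "\<exists>j<n. real j \<le> s \<and> s \<le> real j + 1"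
proof (intro exI conjI)
  \<comment> \<open>for \<open>s = 0\<close> the truncated subtraction gives \<open>j = 0\<close>\<close>
  show "nat \<lceil>s\<rceil> - 1 < n" using assms by linarith
  show "real (nat \<lceil>s\<rceil> - 1) \<le> s" using assms by linarith
  show "s \<le> real (nat \<lceil>s\<rceil> - 1) + 1" using assms by linarith
qed

lemma bowen_ball_map_time_one_subset_flow:
  assumes fl: "is_flow X \<phi>" and lip: "unif_lipschitz_flow X \<phi> L" and x: "x \<in> X"
    and "0 < n" and "t \<le> real n" and "0 < \<epsilon>"
  shows "bowen_ball_map X (\<phi> 1) n x (\<epsilon> / L 1) \<subseteq> bowen_ball_flow X \<phi> t x \<epsilon>"
proof
  fix y assume y: "y \<in> bowen_ball_map X (\<phi> 1) n x (\<epsilon> / L 1)"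
  then have "y \<in> X" by (simp add: bowen_ball_map_def)
  have "dist (\<phi> s x) (\<phi> s y) < \<epsilon>" if s: "s \<in> {0..t}" for s
  proof -
    obtain j where "j < n" and j: "real j \<le> s" "s \<le> real j + 1"
      using unit_interval_cover_nat[of s n] s assms(4,5) by auto
    have "dist (\<phi> (real j) x) (\<phi> (real j) y) < \<epsilon> / L 1"
      using y \<open>j < n\<close> unfolding bowen_ball_map_time_one_eq[OF fl x] by simp
    moreover have "\<forall>u\<in>X. \<forall>v\<in>X. dist u v \<le> \<epsilon> / L 1 \<longrightarrow>
        (\<forall>r\<in>{0..1}. dist (\<phi> r u) (\<phi> r v) < \<epsilon>)"
      using lip \<open>0 < \<epsilon>\<close> unfolding unif_lipschitz_flow_def by (meson zero_less_one)
    moreover have "\<phi> (real j) x \<in> X" and "\<phi> (real j) y \<in> X"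
      using fl x \<open>y \<in> X\<close> by (auto simp: is_flow_def)
    ultimately have
      "dist (\<phi> (s - real j) (\<phi> (real j) x)) (\<phi> (s - real j) (\<phi> (real j) y)) < \<epsilon>"
      using j by (auto dest: less_imp_le)
    then show ?thesis
      using fl x \<open>y \<in> X\<close> unfolding is_flow_def by (metis diff_add_cancel)
  qed
  with \<open>y \<in> X\<close> show "y \<in> bowen_ball_flow X \<phi> t x \<epsilon>"
    by (simp add: bowen_ball_flow_def)
qed

lemma upper_BK_map_le_upper_BK_flow:
  assumes fl: "is_flow X \<phi>" and \<mu>: "prob_space \<mu>" "sets \<mu> = sets (restrict_space borel X)"
    and x: "x \<in> X"
  shows "upper_BK_map X \<mu> (\<phi> 1) x \<epsilon> \<le> upper_BK_flow X \<mu> \<phi> x \<epsilon>"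
proof -
  let ?g = "\<lambda>t. neg_log_rate \<mu> (bowen_ball_flow X \<phi> t x \<epsilon>) t"
  have "eventually (\<lambda>n. neg_log_rate \<mu> (bowen_ball_map X (\<phi> 1) n x \<epsilon>) (real n) \<le> ?g (real n))
      sequentially"
    using eventually_gt_at_top[of "0::nat"]
  proof eventually_elim
    case (elim n)
    show ?case
      using \<mu> sets_bowen_ball_map_time_one[OF fl x] elim
      by (intro neg_log_rate_antimono bowen_ball_flow_subset_map_time_one[OF fl x]) auto
  qed
  then have "upper_BK_map X \<mu> (\<phi> 1) x \<epsilon> \<le> Limsup sequentially (\<lambda>n. ?g (real n))"
    unfolding upper_BK_map_def by (rule Limsup_mono)
  also have "\<dots> \<le> upper_BK_flow X \<mu> \<phi> x \<epsilon>"
    unfolding upper_BK_flow_def by (rule Limsup_compose_filterlim_le[OF filterlim_real_sequentially])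
  finally show ?thesis .
qed

lemma lower_BK_map_le_lower_BK_flow:
  assumes fl: "is_flow X \<phi>" and \<mu>: "prob_space \<mu>" "sets \<mu> = sets (restrict_space borel X)"
    and x: "x \<in> X"
  shows "lower_BK_map X \<mu> (\<phi> 1) x \<epsilon> \<le> lower_BK_flow X \<mu> \<phi> x \<epsilon>"
proof -
  let ?a = "\<lambda>n. neg_log_rate \<mu> (bowen_ball_map X (\<phi> 1) n x \<epsilon>) (real n)"
  have "lower_BK_map X \<mu> (\<phi> 1) x \<epsilon> \<le> Liminf at_top (\<lambda>t::real. ?a (nat \<lceil>t\<rceil>))"
    unfolding lower_BK_map_def by (rule Liminf_compose_filterlim_ge[OF filterlim_nat_ceiling_sequentially])
  also have "\<dots> \<le> lower_BK_flow X \<mu> \<phi> x \<epsilon>"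
    unfolding lower_BK_flow_def
  proof (rule Liminf_mono)
    show "eventually (\<lambda>t. ?a (nat \<lceil>t\<rceil>) \<le> neg_log_rate \<mu> (bowen_ball_flow X \<phi> t x \<epsilon>) t) at_top"
      using eventually_gt_at_top[of "0::real"]
    proof eventually_elim
      case (elim t)
      show ?case
        using \<mu> sets_bowen_ball_map_time_one[OF fl x] elim
        by (intro neg_log_rate_antimono bowen_ball_flow_subset_map_time_one[OF fl x]) auto
    qed
  qed
  finally show ?thesis .
qed

lemma lower_BK_flow_le_lower_BK_map:
  assumes fl: "is_flow X \<phi>" and lip: "unif_lipschitz_flow X \<phi> L"
    and \<mu>: "prob_space \<mu>" "sets \<mu> = sets (restrict_space borel X)" and "0 < \<epsilon>" and x: "x \<in> X"
  shows "lower_BK_flow X \<mu> \<phi> x \<epsilon> \<le> lower_BK_map X \<mu> (\<phi> 1) x (\<epsilon> / L 1)"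
proof -
  let ?g = "\<lambda>t. neg_log_rate \<mu> (bowen_ball_flow X \<phi> t x \<epsilon>) t"
  have "lower_BK_flow X \<mu> \<phi> x \<epsilon> \<le> Liminf sequentially (\<lambda>n. ?g (real n))"
    unfolding lower_BK_flow_def by (rule Liminf_compose_filterlim_ge[OF filterlim_real_sequentially])
  also have "\<dots> \<le> lower_BK_map X \<mu> (\<phi> 1) x (\<epsilon> / L 1)"
    unfolding lower_BK_map_def
  proof (rule Liminf_mono)
    show "eventually (\<lambda>n. ?g (real n)
        \<le> neg_log_rate \<mu> (bowen_ball_map X (\<phi> 1) n x (\<epsilon> / L 1)) (real n)) sequentially"
      using eventually_gt_at_top[of "0::nat"]
    proof eventually_elim
      case (elim n)
      show ?case
        using \<mu> sets_bowen_ball_flow[OF fl x] elim \<open>0 < \<epsilon>\<close>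
        by (intro neg_log_rate_antimono bowen_ball_map_time_one_subset_flow[OF fl lip x]) auto
    qed
  qed
  finally show ?thesis .
qed

lemma upper_BK_flow_le_upper_BK_map:
  assumes fl: "is_flow X \<phi>" and lip: "unif_lipschitz_flow X \<phi> L"
    and \<mu>: "prob_space \<mu>" "sets \<mu> = sets (restrict_space borel X)" and "0 < \<epsilon>" and x: "x \<in> X"
  shows "upper_BK_flow X \<mu> \<phi> x \<epsilon> \<le> upper_BK_map X \<mu> (\<phi> 1) x (\<epsilon> / L 1)"
proof -
  let ?a = "\<lambda>n. neg_log_rate \<mu> (bowen_ball_map X (\<phi> 1) n x (\<epsilon> / L 1)) (real n)"
  have "eventually (\<lambda>t. neg_log_rate \<mu> (bowen_ball_flow X \<phi> t x \<epsilon>) t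
      \<le> ereal (real (nat \<lceil>t\<rceil>) / t) * ?a (nat \<lceil>t\<rceil>)) at_top"
    using eventually_gt_at_top[of "0::real"]
  proof eventually_elim
    case (elim t)
    have "neg_log_rate \<mu> (bowen_ball_flow X \<phi> t x \<epsilon>) t
        \<le> neg_log_rate \<mu> (bowen_ball_map X (\<phi> 1) (nat \<lceil>t\<rceil>) x (\<epsilon> / L 1)) t"
      using \<mu> sets_bowen_ball_flow[OF fl x] elim \<open>0 < \<epsilon>\<close>
      by (intro neg_log_rate_antimono bowen_ball_map_time_one_subset_flow[OF fl lip x]) auto
    also have "\<dots> = ereal (real (nat \<lceil>t\<rceil>) / t) * ?a (nat \<lceil>t\<rceil>)"
      using elim by (intro neg_log_rate_rescale) auto
    finally show ?case .
  qed
  then have "upper_BK_flow X \<mu> \<phi> x \<epsilon>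
      \<le> Limsup at_top (\<lambda>t. ereal (real (nat \<lceil>t\<rceil>) / t) * ?a (nat \<lceil>t\<rceil>))"
    unfolding upper_BK_flow_def by (rule Limsup_mono)
  also have "\<dots> \<le> Limsup at_top (\<lambda>t::real. ?a (nat \<lceil>t\<rceil>))"
  proof (rule Limsup_mult_tendsto_one_le)
    show "((\<lambda>t. real (nat \<lceil>t\<rceil>) / t) \<longlongrightarrow> 1) at_top" by real_asymp
    show "eventually (\<lambda>t::real. 0 \<le> ?a (nat \<lceil>t\<rceil>)) at_top"
      using eventually_gt_at_top[of "0::real"]
      by eventually_elim (use \<mu> in \<open>auto intro: neg_log_rate_nonneg\<close>)
  qed
  also have "\<dots> \<le> upper_BK_map X \<mu> (\<phi> 1) x (\<epsilon> / L 1)"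
    unfolding upper_BK_map_def by (rule Limsup_compose_filterlim_le[OF filterlim_nat_ceiling_sequentially])
  finally show ?thesis .
qed

theorem proposition3p1:
  fixes X :: "'a::metric_space set" and \<phi> :: "real \<Rightarrow> 'a \<Rightarrow> 'a"
    and Lf :: "real \<Rightarrow> real" and \<mu> :: "'a measure"
  assumes "compact X"
    and "is_flow X \<phi>"
    and "unif_lipschitz_flow X \<phi> Lf"
    and "prob_space \<mu>" and "space \<mu> = X" and "sets \<mu> = sets (restrict_space borel X)"
    and "\<epsilon> > 0" and "x \<in> X"
  shows "upper_BK_map X \<mu> (\<phi> 1) x \<epsilon> \<le> upper_BK_flow X \<mu> \<phi> x \<epsilon> \<and>
         upper_BK_flow X \<mu> \<phi> x \<epsilon> \<le> upper_BK_map X \<mu> (\<phi> 1) x (\<epsilon> / Lf 1) \<and>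
         lower_BK_map X \<mu> (\<phi> 1) x \<epsilon> \<le> lower_BK_flow X \<mu> \<phi> x \<epsilon> \<and>
         lower_BK_flow X \<mu> \<phi> x \<epsilon> \<le> lower_BK_map X \<mu> (\<phi> 1) x (\<epsilon> / Lf 1)"
  using upper_BK_map_le_upper_BK_flow[OF assms(2,4,6,8)]
    upper_BK_flow_le_upper_BK_map[OF assms(2,3,4,6,7,8)]
    lower_BK_map_le_lower_BK_flow[OF assms(2,4,6,8)]
    lower_BK_flow_le_lower_BK_map[OF assms(2,3,4,6,7,8)]
  by blast

end
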